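(* Let $n\ge 1$. For every partition $\pi=\{B_1,B_2,\ldots,B_k\}$ of $[n]$ (blocks listed in increasing order of their minimal elements) that is atomic and splitable, define $\varphi(\pi)$ as follows: (1) let $i$ be the smallest element of $B_1$ with $i\ge 2$ such that $\pi=\pi_{[i-1]}\circ(\pi_{[i,n]}-i+1)$ (such an $i$ exists because $\pi$ is splitable); (2) let $j$ be the smallest element of the underlying set of the partition $R(\pi_{[i,n]})$; (3) set $\varphi(\pi)=\pi_{[j-1]}\,\big|\,(\pi_{[j,n]}-j+1)$. Then $\varphi$ is a bijection from the set $\mathcal{A}_n\setminus\mathcal{US}_n$ of atomic, splitable partitions of $[n]$ onto the set $\mathcal{US}_n\setminus\mathcal{A}_n$ of unsplitable, non-atomic partitions of $[n]$.
   Context: $[n]=\{1,\ldots,n\}$ and $[a,b]=\{a,a+1,\ldots,b\}$. A partition of a totally ordered finite set $X$ is a family of disjoint nonempty subsets (blocks) with union $X$; blocks are listed in increasing order of their minimal elements. For $S\subseteq X$, the restriction $\pi_S$ is the partition of $S$ obtained from $\pi$ by deleting all elements not in $S$ (two elements of $S$ are in the same block of $\pi_S$ iff they are in the same block of $\pi$). For a partition $\tau$ of a set of integers and an integer $c$, $\tau-c$ (resp. $\tau+c$) denotes the partition obtained by subtracting (resp. adding) $c$ to every element of every block; thus $\pi_{[i,n]}-i+1$ is a partition of $[n-i+1]$. For $\pi=\{B_1,\ldots,B_k\}$ a partition of $[m]$ and $\sigma=\{C_1,\ldots,C_l\}$ a partition of $[n']$ (blocks in standard order), the slash product is $\pi|\sigma=\{B_1,\ldots,B_k,C_1+m,\ldots,C_l+m\}$,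 a partition of $[m+n']$. A partition is atomic if it is not of the form $\sigma|\tau$ with $\sigma,\tau$ nonempty partitions. The split product is $\pi\circ\sigma=\{B_1\cup(C_1+m),\ldots,B_k\cup(C_k+m),C_{k+1}+m,\ldots,C_l+m\}$ if $k\le l$, and $\{B_1\cup(C_1+m),\ldots,B_l\cup(C_l+m),B_{l+1},\ldots,B_k\}$ if $k>l$. A partition is splitable if it equals $\sigma\circ\tau$ for nonempty partitions $\sigma,\tau$, and unsplitable otherwise. $\mathcal{A}_n$ denotes the set of atomic partitions of $[n]$ and $\mathcal{US}_n$ the set of unsplitable partitions of $[n]$. For a partition $\pi=\{B_1,\ldots,B_k\}$ of $X=\{x_1<x_2<\cdots<x_N\}$, let $r$ be the largest index such that $B_r\cup B_{r+1}\cup\cdots\cup B_k=\{x_t,x_{t+1},\ldots,x_N\}$ for some $t$; then $R(\pi)=\{B_r,B_{r+1},\ldots,B_k\}$. *)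

theory Defs
  imports Main "HOL-Library.Disjoint_Sets"
begin

text \<open>Set partitions are represented as sets of blocks (type nat set set).
  A partition of [m] is a P with partition_on {1..m} P.\<close>

definition shift_up :: "nat \<Rightarrow> nat set set \<Rightarrow> nat set set" where
  "shift_up c P = (\<lambda>B. (\<lambda>x. x + c) ` B) ` P"

definition shift_down :: "nat \<Rightarrow> nat set set \<Rightarrow> nat set set" where
  "shift_down c P = (\<lambda>B. (\<lambda>x. x - c) ` B) ` P"

definition restr :: "nat set set \<Rightarrow> nat set \<Rightarrow> nat set set" where
  "restr P S = {B \<inter> S | B. B \<in> P \<and> B \<inter> S \<noteq> {}}"

definition blocks :: "nat set set \<Rightarrow> nat set list" where
  "blocks P = map (\<lambda>m. THE B. B \<in> P \<and> Min B = m) (sorted_list_of_set (Min ` P))"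

definition slash :: "nat \<Rightarrow> nat set set \<Rightarrow> nat set set \<Rightarrow> nat set set" where
  "slash m P Q = P \<union> shift_up m Q"

definition split_prod :: "nat \<Rightarrow> nat set set \<Rightarrow> nat set set \<Rightarrow> nat set set" where
  "split_prod m P Q =
    (let bs = blocks P; cs = blocks (shift_up m Q); k = length bs; l = length cs in
     {(if t < k then bs ! t else {}) \<union> (if t < l then cs ! t else {}) | t. t < max k l})"

definition atomic :: "nat \<Rightarrow> nat set set \<Rightarrow> bool" where
  "atomic n P \<longleftrightarrow> partition_on {1..n} P \<and>
     \<not> (\<exists>a b S T. a \<ge> 1 \<and> b \<ge> 1 \<and> partition_on {1..a} S \<and> partition_on {1..b} T
            \<and> P = slash a S T)"

definition splitable :: "nat \<Rightarrow> nat set set \<Rightarrow> bool" where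
  "splitable n P \<longleftrightarrow> partition_on {1..n} P \<and>
     (\<exists>a b S T. a \<ge> 1 \<and> b \<ge> 1 \<and> partition_on {1..a} S \<and> partition_on {1..b} T
            \<and> P = split_prod a S T)"

definition A_set :: "nat \<Rightarrow> nat set set set" where
  "A_set n = {P. partition_on {1..n} P \<and> atomic n P}"

definition US_set :: "nat \<Rightarrow> nat set set set" where
  "US_set n = {P. partition_on {1..n} P \<and> \<not> splitable n P}"

text \<open>R(pi): with blocks B_1..B_k (0-indexed here as bs!0..bs!(k-1)), take the
  largest index r such that B_r \<union> ... \<union> B_k is a final segment of the ground set.\<close>
definition R_part :: "nat set set \<Rightarrow> nat set set" where
  "R_part P = (let bs = blocks P; X = \<Union>P;
     r = (GREATEST r. r < length bs \<and>
            (\<exists>t\<in>X. \<Union>(set (drop r bs)) = {x \<in> X. t \<le> x}))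
   in set (drop r bs))"

definition phi :: "nat \<Rightarrow> nat set set \<Rightarrow> nat set set" where
  "phi n P = (let
      i = (LEAST i. i \<in> hd (blocks P) \<and> 2 \<le> i \<and>
             P = split_prod (i - 1) (restr P {1..i-1}) (shift_down (i - 1) (restr P {i..n})));
      j = Min (\<Union>(R_part (restr P {i..n})))
    in slash (j - 1) (restr P {1..j-1}) (shift_down (j - 1) (restr P {j..n})))"

end

theory Submission
  imports Defs
begin

definition restricted_growth :: "nat set \<Rightarrow> (nat \<Rightarrow> nat) \<Rightarrow> bool" where
  "restricted_growth X h \<longleftrightarrow> (\<forall>x\<in>X. \<forall>v<h x. \<exists>y\<in>X. y < x \<and> h y = v)"

definition kernel_partition :: "'a set \<Rightarrow> ('a \<Rightarrow> 'b) \<Rightarrow> 'a set set" where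
  "kernel_partition X h = (\<lambda>x. {y\<in>X. h y = h x}) ` X"

lemma restricted_growthD:
  "restricted_growth X h \<Longrightarrow> x \<in> X \<Longrightarrow> v < h x \<Longrightarrow> \<exists>y\<in>X. y < x \<and> h y = v"
  unfolding restricted_growth_def by blast

lemma restricted_growth_unique:
  assumes h: "restricted_growth X h" and h': "restricted_growth X h'"
    and same_kernel: "\<And>x y. x \<in> X \<Longrightarrow> y \<in> X \<Longrightarrow> h x = h y \<longleftrightarrow> h' x = h' y"
    and "x \<in> X"
  shows "h x = h' x"
  using \<open>x \<in> X\<close>
proof (induction x rule: less_induct)
  case (less x)
  have not_less: "\<not> k x < k' x"
    if k': "restricted_growth X k'" and IH: "\<And>y. y \<in> X \<Longrightarrow> y < x \<Longrightarrow> k y = k' y"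
      and ker: "\<And>y z. y \<in> X \<Longrightarrow> z \<in> X \<Longrightarrow> k y = k z \<longleftrightarrow> k' y = k' z" for k k'
  proof
    assume less: "k x < k' x"
    then obtain y where "y \<in> X" "y < x" "k' y = k x"
      using restricted_growthD[OF k' \<open>x \<in> X\<close> less] by blast
    then show False
      using IH ker \<open>x \<in> X\<close> less by (metis less_irrefl)
  qed
  show ?case
    using not_less[of h' h] not_less[of h h'] h h' same_kernel less.IH by force
qed

lemma restricted_growth_image:
  assumes "finite X" "restricted_growth X h"
  shows "h ` X = {..<card (h ` X)}"
proof -
  have down_closed: "v \<in> h ` X" if "s \<in> h ` X" "v < s" for s v
    using that assms(2) unfolding restricted_growth_def by blast
  have "h ` X \<subseteq> {..<card (h ` X)}"
  proof
    fix s assume "s \<in> h ` X"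
    have "{..s} \<subseteq> h ` X"
    proof
      fix v assume "v \<in> {..s}"
      then show "v \<in> h ` X" using down_closed[OF \<open>s \<in> h ` X\<close>, of v] \<open>s \<in> h ` X\<close>
        by (cases "v = s") auto
    qed
    then have "card {..s} \<le> card (h ` X)" using assms(1) by (intro card_mono) auto
    then show "s \<in> {..<card (h ` X)}" by simp
  qed
  then show ?thesis using card_subset_eq[of "{..<card (h ` X)}"] by simp
qed

lemma restricted_growth_less_card:
  "finite X \<Longrightarrow> restricted_growth X h \<Longrightarrow> x \<in> X \<Longrightarrow> h x < card (h ` X)"
  using restricted_growth_image by blast

lemma restricted_growth_least_zero:
  assumes "restricted_growth X h" "x \<in> X" "\<And>y. y \<in> X \<Longrightarrow> x \<le> y"
  shows "h x = 0"
  using restricted_growthD[OF assms(1,2), of 0] assms(3) by (metis gr0I not_less)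

lemma restricted_growth_cong:
  "restricted_growth X h \<Longrightarrow> (\<And>x. x \<in> X \<Longrightarrow> h x = h' x) \<Longrightarrow> restricted_growth X h'"
  unfolding restricted_growth_def by (metis (no_types, lifting))

lemma restricted_growth_truncate:
  "restricted_growth {a..b} h \<Longrightarrow> b' \<le> b \<Longrightarrow> restricted_growth {a..b'} h"
  unfolding restricted_growth_def by (meson atLeastAtMost_iff le_trans less_imp_le_nat)

lemma restricted_growth_join:
  assumes "restricted_growth {a..c} h" "restricted_growth {i..n} h" "a \<le> i" "i \<le> Suc c"
  shows "restricted_growth {a..n} h"
  unfolding restricted_growth_def
proof (intro ballI allI impI)
  fix x v assume x: "x \<in> {a..n}" and v: "v < h x"
  show "\<exists>y\<in>{a..n}. y < x \<and> h y = v"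
  proof (cases "x \<le> c")
    case True
    then obtain y where "y \<in> {a..c}" "y < x" "h y = v" using restricted_growthD[OF assms(1) _ v] x by auto
    then show ?thesis using x by auto
  next
    case False
    then obtain y where "y \<in> {i..n}" "y < x" "h y = v" using restricted_growthD[OF assms(2) _ v] x assms(4) by auto
    then show ?thesis using assms(3) by auto
  qed
qed

lemma restricted_growth_shift:
  "restricted_growth X h \<Longrightarrow> restricted_growth ((\<lambda>x. x + c) ` X) (\<lambda>y. h (y - c))"
  unfolding restricted_growth_def by (auto simp: image_iff)

lemma restricted_growth_unshift:
  assumes "restricted_growth ((\<lambda>x. x + c) ` X) h"
  shows "restricted_growth X (\<lambda>y. h (y + c))"
  unfolding restricted_growth_def
proof (intro ballI allI impI)
  fix x v assume "x \<in> X" "v < h (x + c)"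
  then obtain y where "y \<in> X" "y + c < x + c" "h (y + c) = v"
    using restricted_growthD[OF assms, of "x + c" v] by auto
  then show "\<exists>y\<in>X. y < x \<and> h (y + c) = v" by auto
qed

text \<open>Relabelling the part above \<open>c\<close>: the growth condition below \<open>c\<close> is inherited from \<open>X\<close>, above \<open>c\<close>
  from a possibly different set \<open>Y\<close> with the same part above \<open>c\<close>.\<close>
lemma restricted_growth_relabel:
  assumes low_part: "restricted_growth {x\<in>X. x \<le> c} h"
    and source: "restricted_growth Y h" and same_high: "{y\<in>Y. c < y} = {x\<in>X. c < x}"
    and low: "\<And>y. y \<in> Y \<Longrightarrow> y \<le> c \<Longrightarrow> h y < a"
    and high: "\<And>x. x \<in> X \<Longrightarrow> c < x \<Longrightarrow> a \<le> h x"
    and covered: "{..<b} \<subseteq> h ` {x\<in>X. x \<le> c}"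
  shows "restricted_growth X (\<lambda>x. if x \<le> c then h x else h x - a + b)"
  unfolding restricted_growth_def
proof (intro ballI allI impI)
  fix x v assume x: "x \<in> X" and v: "v < (if x \<le> c then h x else h x - a + b)"
  show "\<exists>y\<in>X. y < x \<and> (if y \<le> c then h y else h y - a + b) = v"
  proof (cases "x \<le> c")
    case True
    have "x \<in> {x\<in>X. x \<le> c}" "v < h x" using x v True by auto
    then obtain y where "y \<in> {x\<in>X. x \<le> c}" "y < x" "h y = v"
      using restricted_growthD[OF low_part] by blast
    then show ?thesis by auto
  next
    case x_high: False
    show ?thesis
    proof (cases "v < b")
      case True
      then have "v \<in> h ` {x\<in>X. x \<le> c}" using covered by blast
      then obtain y where "y \<in> X" "y \<le> c" "h y = v" by blast
      then show ?thesis using x_high by (intro bexI[of _ y]) auto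
    next
      case False
      have "x \<in> {x\<in>X. c < x}" using x x_high by simp
      then have "x \<in> Y" unfolding same_high[symmetric] by simp
      moreover have "v - b + a < h x" using v x_high high[OF x] False by simp
      ultimately obtain y where y: "y \<in> Y" "y < x" "h y = v - b + a"
        using restricted_growthD[OF source] by blast
      have "c < y"
      proof (rule ccontr)
        assume "\<not> c < y"
        then have "h y < a" using low[OF y(1)] by simp
        then show False using y(3) by simp
      qed
      then have "y \<in> {y\<in>Y. c < y}" using y(1) by simp
      then have "y \<in> X" unfolding same_high by simp
      then show ?thesis using y \<open>c < y\<close> False by (intro bexI[of _ y]) auto
    qed
  qed
qed

lemma partition_on_kernel_partition: "partition_on X (kernel_partition X h)"
  unfolding kernel_partition_def partition_on_def disjoint_def by auto

lemma Union_kernel_partition [simp]: "\<Union>(kernel_partition X h) = X"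
  unfolding kernel_partition_def by auto

lemma kernel_partition_eqI:
  assumes P: "partition_on X P"
    and same_block: "\<And>x y. x \<in> X \<Longrightarrow> y \<in> X \<Longrightarrow> h x = h y \<longleftrightarrow> (\<exists>B\<in>P. x \<in> B \<and> y \<in> B)"
  shows "kernel_partition X h = P"
proof -
  let ?R = "{(x, y). \<exists>B\<in>P. x \<in> B \<and> y \<in> B}"
  have classes: "?R `` {x} = {y\<in>X. h y = h x}" if x: "x \<in> X" for x
  proof (intro set_eqI iffI)
    fix y assume "y \<in> ?R `` {x}"
    then obtain B where "B \<in> P" "x \<in> B" "y \<in> B" by auto
    moreover from this have "y \<in> X" using partition_onD1[OF P] by auto
    ultimately show "y \<in> {y\<in>X. h y = h x}" using same_block[OF x \<open>y \<in> X\<close>] by auto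
  next
    fix y assume "y \<in> {y\<in>X. h y = h x}"
    then show "y \<in> ?R `` {x}" using same_block[OF x, of y] by auto
  qed
  have "X // ?R = kernel_partition X h"
    unfolding quotient_def kernel_partition_def UNION_singleton_eq_range
    by (rule image_cong[OF refl classes])
  then show ?thesis using partition_on_eq_quotient[OF P] by simp
qed

lemma kernel_partition_eq_iff:
  "kernel_partition X h = kernel_partition X h' \<longleftrightarrow> (\<forall>x\<in>X. \<forall>y\<in>X. h x = h y \<longleftrightarrow> h' x = h' y)"
proof
  assume eq: "kernel_partition X h = kernel_partition X h'"
  show "\<forall>x\<in>X. \<forall>y\<in>X. h x = h y \<longleftrightarrow> h' x = h' y"
  proof (intro ballI)
    fix x y assume "x \<in> X" "y \<in> X"
    have "{z\<in>X. h z = h x} \<in> kernel_partition X h"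
      unfolding kernel_partition_def using \<open>x \<in> X\<close> by (rule imageI)
    then have "{z\<in>X. h z = h x} \<in> kernel_partition X h'" using eq by simp
    then obtain z where z: "{w\<in>X. h w = h x} = {w\<in>X. h' w = h' z}"
      unfolding kernel_partition_def by (elim imageE)
    have "x \<in> {w\<in>X. h w = h x}" using \<open>x \<in> X\<close> by simp
    then have "h' x = h' z" unfolding z by simp
    moreover have "h y = h x \<longleftrightarrow> h' y = h' z" using z \<open>y \<in> X\<close> by blast
    ultimately show "h x = h y \<longleftrightarrow> h' x = h' y" by metis
  qed
next
  assume ker: "\<forall>x\<in>X. \<forall>y\<in>X. h x = h y \<longleftrightarrow> h' x = h' y"
  show "kernel_partition X h = kernel_partition X h'"
    unfolding kernel_partition_def
  proof (rule image_cong[OF refl])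
    fix x assume "x \<in> X"
    then show "{y\<in>X. h y = h x} = {y\<in>X. h' y = h' x}" using ker by blast
  qed
qed

lemma kernel_partition_cong:
  "(\<And>x. x \<in> X \<Longrightarrow> h x = h' x) \<Longrightarrow> kernel_partition X h = kernel_partition X h'"
  unfolding kernel_partition_eq_iff by auto

lemma card_less_rank_exists:
  fixes M :: "nat set"
  assumes "finite M" "v < card M"
  shows "\<exists>e\<in>M. card {z\<in>M. z < e} = v"
  using assms
proof (induction M arbitrary: v rule: finite_linorder_max_induct)
  case (insert b A)
  show ?case
  proof (cases "v < card A")
    case True
    then obtain e where "e \<in> A" "card {z\<in>A. z < e} = v" using insert by blast
    moreover have "{z\<in>insert b A. z < e} = {z\<in>A. z < e}" using insert \<open>e \<in> A\<close> by auto
    ultimately show ?thesis by (intro bexI[of _ e]) auto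
  next
    case False
    then have "v = card A" using insert by (fastforce simp: card_insert_if)
    moreover have "{z\<in>insert b A. z < b} = A" using insert by auto
    ultimately show ?thesis by (intro bexI[of _ b]) auto
  qed
qed simp

text \<open>Label each block by the number of blocks whose minimum comes earlier.\<close>
lemma partition_on_eq_kernel_partition:
  assumes "finite X" "partition_on X P"
  shows "\<exists>h. restricted_growth X h \<and> P = kernel_partition X h"
proof -
  have finP: "finite P" using assms finite_elements by blast
  have B: "finite B" "B \<noteq> {}" "B \<subseteq> X" if "B \<in> P" for B
    using partition_onD1[OF assms(2)] partition_onD3[OF assms(2)] assms(1) that
    by (auto intro: rev_finite_subset)
  have unique: "B = B'" if "B \<in> P" "B' \<in> P" "x \<in> B" "x \<in> B'" for B B' x
    using partition_onD2[OF assms(2)] that unfolding disjoint_def by blast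
  define blk where "blk x = (THE B. B \<in> P \<and> x \<in> B)" for x
  have blk_eq: "blk x = B" if "B \<in> P" "x \<in> B" for x B
    unfolding blk_def using that unique by (intro the_equality) blast+
  have blk: "blk x \<in> P" "x \<in> blk x" if x: "x \<in> X" for x
  proof -
    obtain B where "B \<in> P" "x \<in> B" using x partition_onD1[OF assms(2)] by blast
    then show "blk x \<in> P" "x \<in> blk x" using blk_eq by auto
  qed
  define M where "M = Min ` P"
  define h where "h x = card {m\<in>M. m < Min (blk x)}" for x
  have finM: "finite M" unfolding M_def using finP by simp
  have Min_inj: "B = B'" if "B \<in> P" "B' \<in> P" "Min B = Min B'" for B B'
    using unique[OF that(1,2), of "Min B"] Min_in[OF B(1,2)[OF that(1)]] Min_in[OF B(1,2)[OF that(2)]] that(3)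
    by simp
  have h_less: "h x < h y" if "Min (blk x) < Min (blk y)" "x \<in> X" for x y
  proof -
    have "{m\<in>M. m < Min (blk x)} \<subset> {m\<in>M. m < Min (blk y)}"
      using that blk[OF that(2)] unfolding M_def by auto
    then show ?thesis unfolding h_def using finM by (simp add: psubset_card_mono)
  qed
  have "h x = h y \<longleftrightarrow> (\<exists>B\<in>P. x \<in> B \<and> y \<in> B)" if x: "x \<in> X" and y: "y \<in> X" for x y
  proof
    assume "h x = h y"
    then have "Min (blk x) = Min (blk y)"
      using h_less[OF _ x, of y] h_less[OF _ y, of x] by (metis linorder_neqE_nat less_irrefl)
    then show "\<exists>B\<in>P. x \<in> B \<and> y \<in> B" using Min_inj blk x y by metis
  next
    assume "\<exists>B\<in>P. x \<in> B \<and> y \<in> B"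
    then show "h x = h y" using blk_eq unfolding h_def by metis
  qed
  then have "kernel_partition X h = P" by (rule kernel_partition_eqI[OF assms(2)])
  moreover have "restricted_growth X h"
    unfolding restricted_growth_def
  proof (intro ballI allI impI)
    fix x v assume x: "x \<in> X" and "v < h x"
    then obtain e where "e \<in> {m\<in>M. m < Min (blk x)}" "card {z\<in>{m\<in>M. m < Min (blk x)}. z < e} = v"
      using card_less_rank_exists[of "{m\<in>M. m < Min (blk x)}" v] finM unfolding h_def by auto
    then have e: "e \<in> M" "e < Min (blk x)" "card {z\<in>M. z < e} = v"
      by (auto intro: arg_cong[where f = card, THEN trans, rotated])
    then obtain B where "B \<in> P" "e = Min B" unfolding M_def by auto
    then have "e \<in> B" using B(1,2) by simp
    then have "e \<in> X" "blk e = B" using B(3) blk_eq \<open>B \<in> P\<close> by auto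
    moreover have "Min (blk x) \<le> x" using blk[OF x] B by simp
    ultimately show "\<exists>y\<in>X. y < x \<and> h y = v"
      using e \<open>e = Min B\<close> unfolding h_def by (intro bexI[of _ e]) auto
  qed
  ultimately show ?thesis by auto
qed

lemma kernel_partition_fibres: "kernel_partition X h = (\<lambda>t. {x\<in>X. h x = t}) ` h ` X"
  unfolding kernel_partition_def by auto

lemma kernel_partition_Un:
  assumes "\<And>x y. x \<in> A \<Longrightarrow> y \<in> B \<Longrightarrow> h x \<noteq> h y"
  shows "kernel_partition (A \<union> B) h = kernel_partition A h \<union> kernel_partition B h"
proof -
  have "{y \<in> A \<union> B. h y = h x} = {y \<in> A. h y = h x}" if "x \<in> A" for x
    using assms that by force
  moreover have "{y \<in> A \<union> B. h y = h x} = {y \<in> B. h y = h x}" if "x \<in> B" for x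
    using assms that by blast
  ultimately show ?thesis unfolding kernel_partition_def by (auto simp: image_Un)
qed

lemma image_kernel_partition:
  assumes "\<And>x. x \<in> X \<Longrightarrow> g (f x) = x"
  shows "(\<lambda>B. f ` B) ` kernel_partition X h = kernel_partition (f ` X) (\<lambda>y. h (g y))"
proof -
  have "f ` {y\<in>X. h y = h x} = {w\<in>f ` X. h (g w) = h x}" for x
    using assms by force
  then have "(\<lambda>B. f ` B) ` kernel_partition X h = (\<lambda>x. {w\<in>f ` X. h (g w) = h x}) ` X"
    unfolding kernel_partition_def by (simp add: image_image)
  also have "\<dots> = kernel_partition (f ` X) (\<lambda>y. h (g y))"
    unfolding kernel_partition_def image_image using assms by (intro image_cong) auto
  finally show ?thesis .
qed

lemma shift_up_kernel_partition:
  "shift_up c (kernel_partition X h) = kernel_partition ((\<lambda>x. x + c) ` X) (\<lambda>y. h (y - c))"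
  unfolding shift_up_def by (rule image_kernel_partition) simp

lemma shift_down_kernel_partition:
  "(\<And>x. x \<in> X \<Longrightarrow> c \<le> x) \<Longrightarrow>
    shift_down c (kernel_partition X h) = kernel_partition ((\<lambda>x. x - c) ` X) (\<lambda>y. h (y + c))"
  unfolding shift_down_def by (rule image_kernel_partition) simp

lemma restr_kernel_partition: "restr (kernel_partition X h) S = kernel_partition (X \<inter> S) h"
proof (intro equalityI subsetI)
  fix C assume "C \<in> restr (kernel_partition X h) S"
  then obtain x z where "x \<in> X" "C = {y\<in>X. h y = h x} \<inter> S" "z \<in> C"
    unfolding restr_def kernel_partition_def by blast
  then have "C = {y\<in>X \<inter> S. h y = h z}" "z \<in> X \<inter> S" by auto
  then show "C \<in> kernel_partition (X \<inter> S) h" unfolding kernel_partition_def by blast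
next
  fix C assume "C \<in> kernel_partition (X \<inter> S) h"
  then obtain x where "x \<in> X \<inter> S" "C = {y\<in>X. h y = h x} \<inter> S"
    unfolding kernel_partition_def by blast
  then show "C \<in> restr (kernel_partition X h) S"
    unfolding restr_def kernel_partition_def by blast
qed

lemma restricted_growth_Min_fibre_less:
  assumes "finite X" "restricted_growth X h" "s < t" "t \<in> h ` X"
  shows "Min {x\<in>X. h x = s} < Min {x\<in>X. h x = t}"
proof -
  let ?m = "Min {x\<in>X. h x = t}"
  have m: "?m \<in> X" "h ?m = t" using Min_in[of "{x\<in>X. h x = t}"] assms(1,4) by auto
  then obtain y where "y \<in> X" "y < ?m" "h y = s"
    using restricted_growthD[OF assms(2) m(1), of s] assms(3) by auto
  moreover from this have "Min {x\<in>X. h x = s} \<le> y" using assms(1) by (intro Min_le) auto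
  ultimately show ?thesis by simp
qed

lemma blocks_kernel_partition:
  assumes fin: "finite X" and h: "restricted_growth X h"
  shows "blocks (kernel_partition X h) = map (\<lambda>t. {x\<in>X. h x = t}) [0..<card (h ` X)]"
proof -
  define K where "K = card (h ` X)"
  define S where "S t = {x\<in>X. h x = t}" for t
  define first where "first t = Min (S t)" for t
  have img: "h ` X = {..<K}" unfolding K_def using restricted_growth_image[OF fin h] .
  have first_less: "first s < first t" if "s < t" "t < K" for s t
    using restricted_growth_Min_fibre_less[OF fin h] that img unfolding first_def S_def by simp
  then have inj: "inj_on first {..<K}"
    by (intro inj_onI) (metis lessThan_iff linorder_neqE_nat less_irrefl)
  have P: "kernel_partition X h = S ` {..<K}" unfolding kernel_partition_fibres img S_def ..
  have Mins: "Min ` kernel_partition X h = first ` {..<K}" unfolding P first_def by auto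
  have sorted: "sorted_list_of_set (Min ` kernel_partition X h) = map first [0..<K]"
    unfolding Mins using first_less inj
    by (intro sorted_list_of_set_unique[THEN iffD1])
      (auto simp: sorted_wrt_iff_nth_less distinct_map card_image)
  have "(THE B. B \<in> kernel_partition X h \<and> Min B = first t) = S t" if "t < K" for t
  proof (rule the_equality)
    show "S t \<in> kernel_partition X h \<and> Min (S t) = first t" using that unfolding P first_def by auto
  next
    fix B assume "B \<in> kernel_partition X h \<and> Min B = first t"
    then obtain s where "s < K" "B = S s" "first s = first t" unfolding P first_def by auto
    then show "B = S t" using inj that by (metis inj_onD lessThan_iff)
  qed
  then show ?thesis unfolding blocks_def sorted by (auto simp: S_def K_def)
qed

lemma blocks_kernel_partition_nth:
  assumes "finite X" "restricted_growth X h"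
  shows "(if t < length (blocks (kernel_partition X h)) then blocks (kernel_partition X h) ! t else {})
    = {x\<in>X. h x = t}"
proof -
  have "t \<notin> h ` X" if "\<not> t < card (h ` X)"
    using that restricted_growth_image[OF assms] by (metis lessThan_iff)
  then show ?thesis unfolding blocks_kernel_partition[OF assms] by auto
qed

lemma split_prod_kernel_partition:
  assumes h1: "restricted_growth {1..a} h1" and h2: "restricted_growth {1..b} h2"
  shows "split_prod a (kernel_partition {1..a} h1) (kernel_partition {1..b} h2) =
    kernel_partition {1..a+b} (\<lambda>x. if x \<le> a then h1 x else h2 (x - a))"
    (is "_ = kernel_partition _ ?G")
proof -
  let ?H2 = "\<lambda>y. h2 (y - a)"
  have shift: "shift_up a (kernel_partition {1..b} h2) = kernel_partition {a+1..a+b} ?H2"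
    unfolding shift_up_kernel_partition by (simp add: add.commute)
  have H2: "restricted_growth {a+1..a+b} ?H2"
    using restricted_growth_shift[OF h2, of a] by (simp add: add.commute)
  define K1 where "K1 = card (h1 ` {1..a})"
  define K2 where "K2 = card (?H2 ` {a+1..a+b})"
  have img1: "h1 ` {1..a} = {..<K1}" unfolding K1_def by (rule restricted_growth_image[OF _ h1]) simp
  have img2: "?H2 ` {a+1..a+b} = {..<K2}" unfolding K2_def by (rule restricted_growth_image[OF _ H2]) simp
  have fibre: "{x\<in>{1..a}. h1 x = t} \<union> {x\<in>{a+1..a+b}. ?H2 x = t} = {x\<in>{1..a+b}. ?G x = t}" for t
    by auto
  have "?G ` {1..a+b} = h1 ` {1..a} \<union> ?H2 ` {a+1..a+b}"
    by (force simp: image_iff)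
  also have "\<dots> = {..<max K1 K2}" unfolding img1 img2 by (auto simp: max_def)
  finally have G: "kernel_partition {1..a+b} ?G = {{x\<in>{1..a+b}. ?G x = t} | t. t < max K1 K2}"
    unfolding kernel_partition_fibres by auto
  define bs where "bs = blocks (kernel_partition {1..a} h1)"
  define cs where "cs = blocks (kernel_partition {a+1..a+b} ?H2)"
  have len: "length bs = K1" "length cs = K2"
    unfolding bs_def cs_def K1_def K2_def blocks_kernel_partition[OF finite_atLeastAtMost h1]
      blocks_kernel_partition[OF finite_atLeastAtMost H2] by simp_all
  have "(if t < length bs then bs ! t else {}) \<union> (if t < length cs then cs ! t else {})
      = {x\<in>{1..a+b}. ?G x = t}" for t
    unfolding bs_def cs_def blocks_kernel_partition_nth[OF finite_atLeastAtMost h1]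
      blocks_kernel_partition_nth[OF finite_atLeastAtMost H2] fibre ..
  then show ?thesis
    unfolding split_prod_def Let_def shift G bs_def[symmetric] cs_def[symmetric] len by simp
qed

lemma shift_up_shift_down:
  "(\<And>B x. B \<in> P \<Longrightarrow> x \<in> B \<Longrightarrow> c \<le> x) \<Longrightarrow> shift_up c (shift_down c P) = P"
  unfolding shift_up_def shift_down_def image_comp
  by (rule image_cong_simp[THEN trans, OF refl]) (auto simp: image_comp cong: image_cong)

lemma image_minus_atLeastAtMost_nat: "(\<lambda>x. x - c) ` {Suc c..n} = {1..n - c}"
proof (cases "c \<le> n")
  case True
  then have eq: "{Suc c..n} = (\<lambda>x. x + c) ` {1..n - c}" by simp
  show ?thesis unfolding eq image_image by simp
qed simp

lemma shift_down_restr_kernel_partition: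
  "shift_down c (restr (kernel_partition {1..n} f) {Suc c..n}) = kernel_partition {1..n - c} (\<lambda>y. f (y + c))"
proof -
  have "restr (kernel_partition {1..n} f) {Suc c..n} = kernel_partition {Suc c..n} f"
    by (simp add: restr_kernel_partition Int_absorb1)
  moreover have "shift_down c (kernel_partition {Suc c..n} f)
      = kernel_partition ((\<lambda>x. x - c) ` {Suc c..n}) (\<lambda>y. f (y + c))"
    by (rule shift_down_kernel_partition) auto
  ultimately show ?thesis by (simp add: image_minus_atLeastAtMost_nat)
qed

lemma restr_kernel_partition_prefix:
  "c \<le> n \<Longrightarrow> restr (kernel_partition {1..n} f) {1..c} = kernel_partition {1..c} f"
  by (simp add: restr_kernel_partition Int_absorb1)

lemma slash_restr_kernel_partition:
  assumes "c \<le> n"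
  shows "slash c (restr (kernel_partition {1..n} f) {1..c}) (shift_down c (restr (kernel_partition {1..n} f) {Suc c..n}))
    = kernel_partition {1..c} f \<union> kernel_partition {Suc c..n} f"
proof -
  have "restr (kernel_partition {1..n} f) {Suc c..n} = kernel_partition {Suc c..n} f"
    by (simp add: restr_kernel_partition Int_absorb1)
  moreover have "shift_up c (shift_down c (kernel_partition {Suc c..n} f)) = kernel_partition {Suc c..n} f"
    by (rule shift_up_shift_down) (auto simp: kernel_partition_def)
  ultimately show ?thesis
    unfolding slash_def restr_kernel_partition_prefix[OF assms] by simp
qed

definition is_cut :: "(nat \<Rightarrow> nat) \<Rightarrow> nat \<Rightarrow> nat \<Rightarrow> bool" where
  "is_cut f n c \<longleftrightarrow> (\<forall>x\<in>{1..c}. \<forall>y\<in>{Suc c..n}. f x \<noteq> f y)"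

lemma kernel_partition_at_cut:
  assumes "is_cut f n c" "c \<le> n"
  shows "kernel_partition {1..n} f = kernel_partition {1..c} f \<union> kernel_partition {Suc c..n} f"
proof -
  have "{1..n} = {1..c} \<union> {Suc c..n}" using assms(2) by auto
  then show ?thesis using kernel_partition_Un[of "{1..c}" "{Suc c..n}" f] assms(1)
    unfolding is_cut_def by simp
qed

lemma Union_slash:
  assumes "partition_on {1..a} S" "partition_on {1..b} T"
  shows "\<Union>(slash a S T) = {1..a + b}"
proof -
  have "\<Union>(shift_up a T) = (\<lambda>x. x + a) ` {1..b}"
    using partition_onD1[OF assms(2)] unfolding shift_up_def by auto
  then have "\<Union>(shift_up a T) = {Suc a..a + b}" by simp
  moreover have "\<Union>S = {1..a}" using partition_onD1[OF assms(1)] by simp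
  ultimately show ?thesis unfolding slash_def Union_Un_distrib by auto
qed

lemma slash_imp_is_cut:
  assumes S: "partition_on {1..a} S" and T: "partition_on {1..b} T"
    and eq: "kernel_partition {1..n} f = slash a S T"
  shows "n = a + b" "is_cut f n a"
proof -
  have "{1..n} = {1..a + b}" using Union_slash[OF S T] eq by (metis Union_kernel_partition)
  then show n: "n = a + b" by (cases "n = 0") auto
  show "is_cut f n a" unfolding is_cut_def
  proof (intro ballI notI)
    fix x y assume x: "x \<in> {1..a}" and y: "y \<in> {Suc a..n}" and "f x = f y"
    define B where "B = {z\<in>{1..n}. f z = f x}"
    have "B \<in> slash a S T" using eq x n unfolding B_def kernel_partition_def by auto
    then consider "B \<in> S" | "B \<in> shift_up a T" unfolding slash_def by blast
    then have "B \<subseteq> {1..a} \<or> B \<subseteq> {Suc a..a + b}"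
      using partition_onD1[OF S] partition_onD1[OF T] unfolding shift_up_def by cases auto
    moreover have "x \<in> B" "y \<in> B" using x y \<open>f x = f y\<close> n unfolding B_def by auto
    ultimately show False using x y by auto
  qed
qed

lemma atomic_kernel_partition_iff:
  "atomic n (kernel_partition {1..n} f) \<longleftrightarrow> \<not> (\<exists>c. 1 \<le> c \<and> c < n \<and> is_cut f n c)"
proof
  assume atomic: "atomic n (kernel_partition {1..n} f)"
  show "\<not> (\<exists>c. 1 \<le> c \<and> c < n \<and> is_cut f n c)"
  proof
    assume "\<exists>c. 1 \<le> c \<and> c < n \<and> is_cut f n c"
    then obtain c where c: "1 \<le> c" "c < n" "is_cut f n c" by blast
    let ?S = "restr (kernel_partition {1..n} f) {1..c}"
    let ?T = "shift_down c (restr (kernel_partition {1..n} f) {Suc c..n})"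
    have "partition_on {1..c} ?S" "partition_on {1..n - c} ?T"
      unfolding restr_kernel_partition_prefix[OF less_imp_le[OF c(2)]] shift_down_restr_kernel_partition
      by (rule partition_on_kernel_partition)+
    moreover have "kernel_partition {1..n} f = kernel_partition {1..c} f \<union> kernel_partition {Suc c..n} f"
      using kernel_partition_at_cut c by simp
    then have "kernel_partition {1..n} f = slash c ?S ?T"
      using slash_restr_kernel_partition[of c n f] c by simp
    moreover have "1 \<le> n - c" using c by simp
    ultimately have "\<exists>a b S T. 1 \<le> a \<and> 1 \<le> b \<and> partition_on {1..a} S \<and> partition_on {1..b} T
        \<and> kernel_partition {1..n} f = slash a S T"
      using c(1) by blast
    then show False using atomic unfolding atomic_def by blast
  qed
next
  assume no_cut: "\<not> (\<exists>c. 1 \<le> c \<and> c < n \<and> is_cut f n c)"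
  show "atomic n (kernel_partition {1..n} f)"
    unfolding atomic_def
  proof (intro conjI partition_on_kernel_partition notI)
    assume "\<exists>a b S T. 1 \<le> a \<and> 1 \<le> b \<and> partition_on {1..a} S \<and> partition_on {1..b} T
        \<and> kernel_partition {1..n} f = slash a S T"
    then obtain a b S T where "1 \<le> a" "1 \<le> b" "partition_on {1..a} S" "partition_on {1..b} T"
        "kernel_partition {1..n} f = slash a S T" by blast
    then have "n = a + b" "is_cut f n a" using slash_imp_is_cut by blast+
    then show False using no_cut \<open>1 \<le> a\<close> \<open>1 \<le> b\<close> by auto
  qed
qed

lemma split_prod_imp_restricted_growth:
  assumes f: "restricted_growth {1..n} f" and S: "partition_on {1..a} S" and T: "partition_on {1..b} T"
    and eq: "kernel_partition {1..n} f = split_prod a S T"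
  shows "n = a + b" "restricted_growth {Suc a..n} f"
proof -
  obtain h1 where h1: "restricted_growth {1..a} h1" "S = kernel_partition {1..a} h1"
    using partition_on_eq_kernel_partition[OF _ S] by auto
  obtain h2 where h2: "restricted_growth {1..b} h2" "T = kernel_partition {1..b} h2"
    using partition_on_eq_kernel_partition[OF _ T] by auto
  define G where "G x = (if x \<le> a then h1 x else h2 (x - a))" for x
  have eq': "kernel_partition {1..n} f = kernel_partition {1..a+b} G"
    using eq split_prod_kernel_partition[OF h1(1) h2(1)] unfolding h1(2) h2(2) G_def by simp
  then have "{1..n} = {1..a + b}" by (metis Union_kernel_partition)
  then show n: "n = a + b" by (cases "n = 0") auto
  have high: "restricted_growth {Suc a..a+b} (\<lambda>y. h2 (y - a))"
    using restricted_growth_shift[OF h2(1), of a] by (simp add: add.commute)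
  have "restricted_growth {1..a+b} G"
    by (rule restricted_growth_join[OF restricted_growth_cong[OF h1(1)] restricted_growth_cong[OF high]])
      (auto simp: G_def)
  then have G: "restricted_growth {1..n} G" using n by simp
  have "kernel_partition {1..n} f = kernel_partition {1..n} G" using eq' n by simp
  then have "f x = G x" if "x \<in> {1..n}" for x
    using restricted_growth_unique[OF f G _ that] unfolding kernel_partition_eq_iff by blast
  then show "restricted_growth {Suc a..n} f"
    using restricted_growth_cong[OF high] n by (simp add: G_def)
qed

lemma split_prod_restr_kernel_partition:
  assumes f: "restricted_growth {1..n} f" and tail: "restricted_growth {Suc a..n} f" and "a \<le> n"
  shows "kernel_partition {1..n} f = split_prod a (restr (kernel_partition {1..n} f) {1..a})
    (shift_down a (restr (kernel_partition {1..n} f) {Suc a..n}))"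
proof -
  have img: "(\<lambda>x. x + a) ` {1..n - a} = {Suc a..n}" using \<open>a \<le> n\<close> by simp
  have "restricted_growth ((\<lambda>x. x + a) ` {1..n - a}) f" unfolding img by (rule tail)
  then have "restricted_growth {1..n - a} (\<lambda>y. f (y + a))" by (rule restricted_growth_unshift)
  then have "split_prod a (kernel_partition {1..a} f) (kernel_partition {1..n - a} (\<lambda>y. f (y + a)))
      = kernel_partition {1..n} (\<lambda>x. if x \<le> a then f x else f (x - a + a))"
    using split_prod_kernel_partition[OF restricted_growth_truncate[OF f \<open>a \<le> n\<close>]] \<open>a \<le> n\<close> by simp
  also have "\<dots> = kernel_partition {1..n} f" by (rule kernel_partition_cong) auto
  finally show ?thesis
    unfolding restr_kernel_partition_prefix[OF \<open>a \<le> n\<close>] shift_down_restr_kernel_partition by simp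
qed

lemma split_at_iff_restricted_growth:
  assumes f: "restricted_growth {1..n} f" and "2 \<le> i" "i \<le> n"
  shows "kernel_partition {1..n} f = split_prod (i - 1) (restr (kernel_partition {1..n} f) {1..i-1})
      (shift_down (i - 1) (restr (kernel_partition {1..n} f) {i..n}))
    \<longleftrightarrow> restricted_growth {i..n} f"
proof -
  have i: "Suc (i - 1) = i" "i - 1 \<le> n" using assms(2,3) by auto
  have S: "partition_on {1..i - 1} (restr (kernel_partition {1..n} f) {1..i-1})"
    and T: "partition_on {1..n - (i - 1)} (shift_down (i - 1) (restr (kernel_partition {1..n} f) {i..n}))"
    using shift_down_restr_kernel_partition[of "i - 1" n f]
    unfolding restr_kernel_partition_prefix[OF i(2)] i(1) by (simp_all add: partition_on_kernel_partition)
  show ?thesis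
  proof
    assume "kernel_partition {1..n} f = split_prod (i - 1) (restr (kernel_partition {1..n} f) {1..i-1})
      (shift_down (i - 1) (restr (kernel_partition {1..n} f) {i..n}))"
    then show "restricted_growth {i..n} f"
      using split_prod_imp_restricted_growth(2)[OF f S T] i(1) by simp
  next
    assume "restricted_growth {i..n} f"
    then show "kernel_partition {1..n} f = split_prod (i - 1) (restr (kernel_partition {1..n} f) {1..i-1})
      (shift_down (i - 1) (restr (kernel_partition {1..n} f) {i..n}))"
      using split_prod_restr_kernel_partition[OF f _ i(2)] i(1) by simp
  qed
qed

lemma splitable_kernel_partition_iff:
  assumes f: "restricted_growth {1..n} f"
  shows "splitable n (kernel_partition {1..n} f) \<longleftrightarrow> (\<exists>i. 2 \<le> i \<and> i \<le> n \<and> restricted_growth {i..n} f)"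
proof
  assume "splitable n (kernel_partition {1..n} f)"
  then obtain a b S T where "1 \<le> a" "1 \<le> b" "partition_on {1..a} S" "partition_on {1..b} T"
    "kernel_partition {1..n} f = split_prod a S T"
    unfolding splitable_def by blast
  then show "\<exists>i. 2 \<le> i \<and> i \<le> n \<and> restricted_growth {i..n} f"
    using split_prod_imp_restricted_growth[OF f] by (intro exI[of _ "Suc a"]) auto
next
  assume "\<exists>i. 2 \<le> i \<and> i \<le> n \<and> restricted_growth {i..n} f"
  then obtain i where i: "2 \<le> i" "i \<le> n" "restricted_growth {i..n} f" by blast
  let ?P = "kernel_partition {1..n} f"
  have "partition_on {1..i - 1} (restr ?P {1..i-1})"
    "partition_on {1..n - (i - 1)} (shift_down (i - 1) (restr ?P {Suc (i - 1)..n}))"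
    using restr_kernel_partition_prefix[of "i - 1" n f] shift_down_restr_kernel_partition[of "i - 1" n f] i
    by (simp_all add: partition_on_kernel_partition)
  moreover have "?P = split_prod (i - 1) (restr ?P {1..i-1}) (shift_down (i - 1) (restr ?P {Suc (i - 1)..n}))"
    using split_at_iff_restricted_growth[OF f i(1,2)] i by simp
  moreover have "1 \<le> i - 1" "1 \<le> n - (i - 1)" using i by auto
  ultimately show "splitable n ?P" unfolding splitable_def
    by (blast intro: partition_on_kernel_partition)
qed

definition first_split :: "(nat \<Rightarrow> nat) \<Rightarrow> nat \<Rightarrow> nat" where
  "first_split f n = (LEAST i. 2 \<le> i \<and> i \<le> n \<and> restricted_growth {i..n} f)"

text \<open>The label of the first block of \<open>R\<close> of the partition of \<open>X\<close> labelled by \<open>h\<close>.\<close>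
definition R_label :: "nat set \<Rightarrow> (nat \<Rightarrow> nat) \<Rightarrow> nat" where
  "R_label X h = (GREATEST r. r < card (h ` X) \<and> (\<exists>t\<in>X. {x\<in>X. r \<le> h x} = {x\<in>X. t \<le> x}))"

definition R_start :: "(nat \<Rightarrow> nat) \<Rightarrow> nat \<Rightarrow> nat" where
  "R_start f n = Min {x\<in>{first_split f n..n}. R_label {first_split f n..n} f \<le> f x}"

definition phi_rgf :: "(nat \<Rightarrow> nat) \<Rightarrow> nat \<Rightarrow> nat \<Rightarrow> nat" where
  "phi_rgf f n x = (if x < R_start f n then f x
     else f x - R_label {first_split f n..n} f + card (f ` {1..R_start f n - 1}))"

lemma R_label_greatest:
  assumes "r < card (h ` X)" "t \<in> X" "{x\<in>X. r \<le> h x} = {x\<in>X. t \<le> x}"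
  shows "r \<le> R_label X h"
  unfolding R_label_def
proof (rule Greatest_le_nat[where b = "card (h ` X)"])
  show "r < card (h ` X) \<and> (\<exists>t\<in>X. {x\<in>X. r \<le> h x} = {x\<in>X. t \<le> x})"
    by (intro conjI bexI[of _ t] assms)
qed simp

lemma R_label:
  assumes "finite X" "X \<noteq> {}"
  shows "R_label X h < card (h ` X)" "\<exists>t\<in>X. {x\<in>X. R_label X h \<le> h x} = {x\<in>X. t \<le> x}"
proof -
  have "0 < card (h ` X) \<and> (\<exists>t\<in>X. {x\<in>X. 0 \<le> h x} = {x\<in>X. t \<le> x})"
    using assms by (intro conjI bexI[of _ "Min X"]) auto
  then have "R_label X h < card (h ` X) \<and> (\<exists>t\<in>X. {x\<in>X. R_label X h \<le> h x} = {x\<in>X. t \<le> x})"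
    unfolding R_label_def by (rule GreatestI_nat[where b = "card (h ` X)"]) simp
  then show "R_label X h < card (h ` X)" "\<exists>t\<in>X. {x\<in>X. R_label X h \<le> h x} = {x\<in>X. t \<le> x}"
    by blast+
qed

lemma Union_R_part:
  assumes "finite X" "restricted_growth X h"
  shows "\<Union>(R_part (kernel_partition X h)) = {x\<in>X. R_label X h \<le> h x}"
proof -
  define S where "S t = {x\<in>X. h x = t}" for t
  have "\<Union>(set (drop r (map S [0..<card (h ` X)]))) = {x\<in>X. r \<le> h x}" for r
    using restricted_growth_less_card[OF assms] unfolding S_def by (auto simp: drop_map)
  then show ?thesis
    unfolding R_part_def Let_def blocks_kernel_partition[OF assms] S_def[symmetric] R_label_def
    by simp
qed

lemma hd_blocks_kernel_partition:
  assumes "1 \<le> n" "restricted_growth {1..n} f"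
  shows "hd (blocks (kernel_partition {1..n} f)) = {x\<in>{1..n}. f x = 0}"
proof -
  have "card (f ` {1..n}) \<noteq> 0" using assms(1) by simp
  then have "[0..<card (f ` {1..n})] = 0 # [1..<card (f ` {1..n})]" by (simp add: upt_rec)
  then show ?thesis using blocks_kernel_partition[OF _ assms(2)] by simp
qed

text \<open>The index \<open>i\<close> of step (1) of the definition of \<open>phi\<close>; it lies in the first block because a
  restricted growth function starts with label \<open>0\<close>.\<close>
lemma first_split_eq:
  assumes "1 \<le> n" "restricted_growth {1..n} f"
  shows "(LEAST i. i \<in> hd (blocks (kernel_partition {1..n} f)) \<and> 2 \<le> i \<and>
      kernel_partition {1..n} f = split_prod (i - 1) (restr (kernel_partition {1..n} f) {1..i-1})
        (shift_down (i - 1) (restr (kernel_partition {1..n} f) {i..n}))) = first_split f n"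
proof -
  have "(i \<in> hd (blocks (kernel_partition {1..n} f)) \<and> 2 \<le> i \<and>
      kernel_partition {1..n} f = split_prod (i - 1) (restr (kernel_partition {1..n} f) {1..i-1})
        (shift_down (i - 1) (restr (kernel_partition {1..n} f) {i..n})))
    \<longleftrightarrow> 2 \<le> i \<and> i \<le> n \<and> restricted_growth {i..n} f" for i
  proof (cases "2 \<le> i \<and> i \<le> n")
    case True
    have "restricted_growth {i..n} f \<Longrightarrow> f i = 0"
      using True by (intro restricted_growth_least_zero) auto
    then show ?thesis
      using split_at_iff_restricted_growth[OF assms(2), of i] True hd_blocks_kernel_partition[OF assms]
      by auto
  qed (use hd_blocks_kernel_partition[OF assms] in auto)
  then show ?thesis unfolding first_split_def by simp
qed

definition last_cut :: "(nat \<Rightarrow> nat) \<Rightarrow> nat \<Rightarrow> nat" where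
  "last_cut g n = (GREATEST c. 1 \<le> c \<and> c < n \<and> is_cut g n c)"

definition psi_split :: "(nat \<Rightarrow> nat) \<Rightarrow> nat \<Rightarrow> nat" where
  "psi_split g n = (LEAST i. 2 \<le> i \<and> i \<le> Suc (last_cut g n) \<and> restricted_growth {i..last_cut g n} g
     \<and> card (g ` {i..last_cut g n}) < card (g ` {1..last_cut g n}))"

definition psi_rgf :: "(nat \<Rightarrow> nat) \<Rightarrow> nat \<Rightarrow> nat \<Rightarrow> nat" where
  "psi_rgf g n x = (if x \<le> last_cut g n then g x
     else g x - card (g ` {1..last_cut g n}) + card (g ` {psi_split g n..last_cut g n}))"

lemma is_cut_cong:
  assumes "\<And>x. x \<in> {1..n} \<Longrightarrow> g x = g' x"
  shows "is_cut g n c \<longleftrightarrow> is_cut g' n c"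
  unfolding is_cut_def
proof (intro ball_cong refl)
  fix x y assume "x \<in> {1..c}" "y \<in> {Suc c..n}"
  then show "(g x \<noteq> g y) = (g' x \<noteq> g' y)" using assms[of x] assms[of y] by simp
qed

lemma psi_rgf_cong:
  assumes eq: "\<And>x. x \<in> {1..n} \<Longrightarrow> g x = g' x" and c: "1 \<le> last_cut g n" "last_cut g n < n"
    and x: "x \<in> {1..n}"
  shows "psi_rgf g n x = psi_rgf g' n x"
proof -
  let ?c = "last_cut g n"
  have c': "last_cut g' n = ?c" unfolding last_cut_def using is_cut_cong[OF eq] by simp
  have image: "g ` {a..?c} = g' ` {a..?c}" if "1 \<le> a" for a
    using eq that c by (intro image_cong) auto
  have growth: "restricted_growth {b..?c} g \<longleftrightarrow> restricted_growth {b..?c} g'" if "1 \<le> b" for b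
    by (intro iffI; erule restricted_growth_cong) (use eq that c in auto)
  have split: "psi_split g' n = psi_split g n"
    unfolding psi_split_def c'
  proof (intro arg_cong[where f = Least] ext)
    fix i
    show "(2 \<le> i \<and> i \<le> Suc ?c \<and> restricted_growth {i..?c} g' \<and> card (g' ` {i..?c}) < card (g' ` {1..?c}))
      = (2 \<le> i \<and> i \<le> Suc ?c \<and> restricted_growth {i..?c} g \<and> card (g ` {i..?c}) < card (g ` {1..?c}))"
      by (cases "2 \<le> i") (simp_all add: image growth)
  qed
  have "2 \<le> psi_split g n"
    unfolding psi_split_def by (rule LeastI2[of _ "Suc ?c"]) (use c in \<open>auto simp: restricted_growth_def card_gt_0_iff\<close>)
  then show ?thesis
    unfolding psi_rgf_def c' split using eq[OF x] image[of 1] image[of "psi_split g n"] by simp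
qed

locale phi_domain =
  fixes f :: "nat \<Rightarrow> nat" and n :: nat
  assumes n_pos: "1 \<le> n" and rgf: "restricted_growth {1..n} f"
    and no_cut: "\<And>c. 1 \<le> c \<Longrightarrow> c < n \<Longrightarrow> \<not> is_cut f n c"
    and splitable: "\<exists>i. 2 \<le> i \<and> i \<le> n \<and> restricted_growth {i..n} f"
begin

abbreviation "i \<equiv> first_split f n"
abbreviation "r \<equiv> R_label {i..n} f"
abbreviation "j \<equiv> R_start f n"
definition k :: nat where "k = card (f ` {1..j - 1})"
abbreviation "g \<equiv> phi_rgf f n"

lemma first_split: "2 \<le> i" "i \<le> n" "restricted_growth {i..n} f"
  using LeastI_ex[OF splitable] unfolding first_split_def by auto

lemma first_split_least: "2 \<le> b \<Longrightarrow> b \<le> n \<Longrightarrow> restricted_growth {b..n} f \<Longrightarrow> i \<le> b"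
  unfolding first_split_def by (rule Least_le) simp

lemma R_start: "i \<le> j" "j \<le> n" and R_start_iff: "x \<in> {i..n} \<Longrightarrow> r \<le> f x \<longleftrightarrow> j \<le> x"
proof -
  have ne: "{i..n} \<noteq> {}" using first_split(2) by simp
  obtain t where t: "t \<in> {i..n}" "{x\<in>{i..n}. r \<le> f x} = {x\<in>{i..n}. t \<le> x}"
    using R_label(2)[OF finite_atLeastAtMost ne] by (rule bexE)
  have "{x\<in>{i..n}. t \<le> x} = {t..n}" using t(1) by auto
  moreover have "Min {t..n} = t" using t(1) by (intro Min_eqI) auto
  ultimately have "j = t" unfolding R_start_def t(2) by simp
  then show "i \<le> j" "j \<le> n" using t(1) by auto
  assume "x \<in> {i..n}"
  moreover have "x \<in> {x\<in>{i..n}. r \<le> f x} \<longleftrightarrow> x \<in> {x\<in>{i..n}. t \<le> x}" by (simp only: t(2))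
  ultimately show "r \<le> f x \<longleftrightarrow> j \<le> x" using \<open>j = t\<close> by simp
qed

lemma two_le_R_start: "2 \<le> j"
  using first_split R_start by simp

lemma le_pred_R_start_iff: "x \<le> j - 1 \<longleftrightarrow> x < j"
  using two_le_R_start by auto

lemma R_label_le: "j \<le> x \<Longrightarrow> x \<le> n \<Longrightarrow> r \<le> f x"
  using R_start_iff R_start by auto

lemma f_R_start: "f j = r"
proof -
  have j: "j \<in> {i..n}" using R_start by auto
  have "\<not> r < f j"
  proof
    assume "r < f j"
    then obtain y where "y \<in> {i..n}" "y < j" "f y = r"
      using restricted_growthD[OF first_split(3) j] by blast
    then show False using R_start_iff[of y] by simp
  qed
  then show ?thesis using R_start_iff[OF j] by simp
qed

lemma middle_image: "f ` {i..j - 1} = {..<r}"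
proof
  show "f ` {i..j - 1} \<subseteq> {..<r}"
  proof
    fix v assume "v \<in> f ` {i..j - 1}"
    then obtain x where "x \<in> {i..n}" "\<not> j \<le> x" "v = f x" using R_start two_le_R_start by auto
    then show "v \<in> {..<r}" using R_start_iff[of x] by simp
  qed
  show "{..<r} \<subseteq> f ` {i..j - 1}"
  proof
    fix v assume "v \<in> {..<r}"
    then obtain y where "y \<in> {i..n}" "y < j" "f y = v"
      using restricted_growthD[OF first_split(3), of j v] R_start f_R_start by auto
    then show "v \<in> f ` {i..j - 1}" by auto
  qed
qed

lemma prefix_image: "f ` {1..j - 1} = {..<k}"
  unfolding k_def using restricted_growth_image[OF _ restricted_growth_truncate[OF rgf]] R_start by simp

lemma R_label_less: "r < k"
proof (rule ccontr)
  assume "\<not> r < k"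
  have "f x \<noteq> f y" if "x \<in> {1..j - 1}" "y \<in> {Suc (j - 1)..n}" for x y
  proof -
    have "f x < k" using prefix_image that(1) by blast
    moreover have "r \<le> f y" using R_label_le that(2) two_le_R_start by simp
    ultimately show ?thesis using \<open>\<not> r < k\<close> by simp
  qed
  then have "is_cut f n (j - 1)" unfolding is_cut_def by blast
  moreover have "1 \<le> j - 1" "j - 1 < n" using two_le_R_start R_start by auto
  ultimately show False using no_cut by blast
qed

lemma phi_rgf_low: "x < j \<Longrightarrow> g x = f x"
  and phi_rgf_high: "j \<le> x \<Longrightarrow> g x = f x - r + k"
  unfolding phi_rgf_def k_def by simp_all

lemma phi_rgf_restricted_growth: "restricted_growth {1..n} g"
proof -
  have prefix: "{x\<in>{1..n}. x \<le> j - 1} = {1..j - 1}" using R_start by auto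
  have low_part: "restricted_growth {x\<in>{1..n}. x \<le> j - 1} f"
    unfolding prefix using restricted_growth_truncate[OF rgf, of "j - 1"] R_start by simp
  have same_high: "{y\<in>{i..n}. j - 1 < y} = {x\<in>{1..n}. j - 1 < x}"
    using first_split R_start by auto
  have low: "f y < r" if "y \<in> {i..n}" "y \<le> j - 1" for y
    using R_start_iff[OF that(1)] that(2) le_pred_R_start_iff by simp
  have high: "r \<le> f x" if "x \<in> {1..n}" "j - 1 < x" for x
    using R_label_le that le_pred_R_start_iff by simp
  have covered: "{..<k} \<subseteq> f ` {x\<in>{1..n}. x \<le> j - 1}"
    unfolding prefix prefix_image by simp
  have "(if x \<le> j - 1 then f x else f x - r + k) = g x" for x
    using phi_rgf_low[of x] phi_rgf_high[of x] le_pred_R_start_iff[of x] by (cases "x < j") auto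
  then show ?thesis
    using restricted_growth_relabel[OF low_part first_split(3) same_high low high covered]
    by (rule_tac restricted_growth_cong) auto
qed

lemma phi_rgf_cut: "is_cut g n (j - 1)"
  unfolding is_cut_def
proof (intro ballI)
  fix x y assume x: "x \<in> {1..j - 1}" and y: "y \<in> {Suc (j - 1)..n}"
  have "g x < k" using phi_rgf_low[of x] prefix_image x two_le_R_start by force
  moreover have "k \<le> g y" using phi_rgf_high[of y] y two_le_R_start by simp
  ultimately show "g x \<noteq> g y" by simp
qed

lemma phi_rgf_unsplitable:
  assumes b: "2 \<le> b" "b \<le> n"
  shows "\<not> restricted_growth {b..n} g"
proof
  assume g: "restricted_growth {b..n} g"
  have g_j: "g j = k" using phi_rgf_high f_R_start by simp
  show False
  proof (cases "j \<le> b")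
    case True
    have "g b = 0" using g b by (intro restricted_growth_least_zero) auto
    then show False using phi_rgf_high[OF True] R_label_less by simp
  next
    case False
    then have j: "j \<in> {b..n}" using R_start by auto
    have prefix: "{x\<in>{b..n}. x \<le> j - 1} = {b..j - 1}" using R_start by auto
    have low_witness: "\<exists>y\<in>{b..n}. y < j \<and> g y = v" if "v < k" for v
      using restricted_growthD[OF g j] that g_j by simp
    have "restricted_growth {b..n} (\<lambda>x. if x \<le> j - 1 then g x else g x - k + r)"
    proof (rule restricted_growth_relabel[where Y = "{b..n}" and h = g and c = "j - 1" and a = k and b = r])
      show "restricted_growth {x\<in>{b..n}. x \<le> j - 1} g"
        unfolding prefix using restricted_growth_truncate[OF g, of "j - 1"] R_start by simp
      show "g y < k" if "y \<in> {b..n}" "y \<le> j - 1" for y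
        using that phi_rgf_low[of y] prefix_image b two_le_R_start by force
      show "k \<le> g x" if "x \<in> {b..n}" "j - 1 < x" for x
        using that phi_rgf_high[of x] by simp
      show "{..<r} \<subseteq> g ` {x\<in>{b..n}. x \<le> j - 1}"
      proof
        fix v assume "v \<in> {..<r}"
        then have "v < k" using R_label_less by simp
        then obtain y where "y \<in> {b..n}" "y < j" "g y = v" using low_witness by blast
        then show "v \<in> g ` {x\<in>{b..n}. x \<le> j - 1}" by force
      qed
    qed (use g in simp_all)
    then have "restricted_growth {b..n} f"
      by (rule restricted_growth_cong) (use R_label_le in \<open>auto simp: phi_rgf_low phi_rgf_high le_pred_R_start_iff[simplified]\<close>)
    then have "i \<le> b" using first_split_least b by simp
    moreover obtain y where "y \<in> {b..n}" "y < j" "g y = r" using low_witness R_label_less by blast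
    ultimately have "y \<in> {i..j - 1}" "f y = r" using phi_rgf_low by auto
    then show False using middle_image by (metis imageI lessThan_iff less_irrefl)
  qed
qed

lemma middle_below_later_tail:
  assumes "j \<le> c" "c < n" "is_cut g n c" "x \<in> {i..c}"
  shows "f x < Min (f ` {Suc c..n})"
proof (rule ccontr)
  define m where "m = Min (f ` {Suc c..n})"
  have "m \<in> f ` {Suc c..n}" unfolding m_def using assms(2) by (intro Min_in) auto
  then obtain y where y: "y \<in> {Suc c..n}" "f y = m" by blast
  assume "\<not> f x < Min (f ` {Suc c..n})"
  then have "m \<le> f x" unfolding m_def by simp
  then obtain z where z: "z \<in> {i..n}" "z \<le> x" "f z = m"
    using restricted_growthD[OF first_split(3), of x m] assms(2,4) by (cases "m = f x") force+
  show False
  proof (cases "z < j")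
    case True
    then have "f z < r" using middle_image z by force
    then show False using R_label_le[of y] y z assms(1) by simp
  next
    case False
    then have "g z = g y" using phi_rgf_high[of z] phi_rgf_high[of y] y z assms(1) by simp
    moreover have "z \<in> {1..c}" "y \<in> {Suc c..n}" using z y assms(4) first_split by auto
    ultimately show False using assms(3) unfolding is_cut_def by blast
  qed
qed

lemma no_cut_after_R_start:
  assumes "j \<le> c" "c < n"
  shows "\<not> is_cut g n c"
proof
  assume cut: "is_cut g n c"
  define m where "m = Min (f ` {Suc c..n})"
  have "m \<in> f ` {Suc c..n}" unfolding m_def using assms(2) by (intro Min_in) auto
  then obtain y where y: "y \<in> {Suc c..n}" "f y = m" by blast
  have "m \<le> f x \<longleftrightarrow> Suc c \<le> x" if "x \<in> {i..n}" for x
  proof (cases "x \<le> c")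
    case True
    then show ?thesis using middle_below_later_tail[OF assms cut, of x] that unfolding m_def by simp
  next
    case False
    then show ?thesis using that unfolding m_def by (simp add: Min_le)
  qed
  then have "{x\<in>{i..n}. m \<le> f x} = {x\<in>{i..n}. Suc c \<le> x}" by blast
  moreover have "m < card (f ` {i..n})" "Suc c \<in> {i..n}"
    using restricted_growth_less_card[OF _ first_split(3), of y] y R_start assms by auto
  ultimately have "m \<le> r" by (intro R_label_greatest)
  moreover have "r \<le> m" using R_label_le[of y] y assms by simp
  ultimately have "m \<le> f j" using f_R_start by simp
  then show False using \<open>\<And>x. x \<in> {i..n} \<Longrightarrow> m \<le> f x \<longleftrightarrow> Suc c \<le> x\<close>[of j] R_start assms(1) by simp
qed

lemma no_split_before_first_split:
  assumes "2 \<le> b" "b < i"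
  shows "\<not> restricted_growth {b..j - 1} f"
proof
  assume "restricted_growth {b..j - 1} f"
  then have "restricted_growth {b..n} f"
    by (rule restricted_growth_join[OF _ first_split(3)]) (use assms R_start two_le_R_start in auto)
  then show False using first_split_least[of b] assms first_split by simp
qed

lemma phi_kernel_partition: "phi n (kernel_partition {1..n} f) = kernel_partition {1..n} g"
proof -
  let ?P = "kernel_partition {1..n} f"
  have "restr ?P {i..n} = kernel_partition {i..n} f"
    using first_split by (simp add: restr_kernel_partition Int_absorb1)
  then have "Min (\<Union>(R_part (restr ?P {i..n}))) = j"
    unfolding R_start_def using Union_R_part[OF _ first_split(3)] by simp
  then have "phi n ?P = slash (j - 1) (restr ?P {1..j - 1}) (shift_down (j - 1) (restr ?P {Suc (j - 1)..n}))"
    unfolding phi_def Let_def first_split_eq[OF n_pos rgf] using two_le_R_start by simp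
  also have "\<dots> = kernel_partition {1..j - 1} f \<union> kernel_partition {j..n} f"
    using slash_restr_kernel_partition[of "j - 1" n f] R_start two_le_R_start by simp
  also have "kernel_partition {1..j - 1} f = kernel_partition {1..j - 1} g"
    using phi_rgf_low two_le_R_start by (intro kernel_partition_cong) auto
  also have "kernel_partition {j..n} f = kernel_partition {j..n} g"
    unfolding kernel_partition_eq_iff
  proof (intro ballI)
    fix x y assume "x \<in> {j..n}" "y \<in> {j..n}"
    then have "r \<le> f x" "r \<le> f y" "g x = f x - r + k" "g y = f y - r + k"
      using R_label_le phi_rgf_high by auto
    then show "f x = f y \<longleftrightarrow> g x = g y" by arith
  qed
  also have "kernel_partition {1..j - 1} g \<union> kernel_partition {j..n} g = kernel_partition {1..n} g"
    using kernel_partition_at_cut[OF phi_rgf_cut] R_start two_le_R_start by simp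
  finally show ?thesis .
qed

lemma phi_rgf_image_prefix: "g ` {a..j - 1} = f ` {a..j - 1}"
  using phi_rgf_low le_pred_R_start_iff by (intro image_cong) auto

lemma last_cut_phi_rgf: "last_cut g n = j - 1"
  unfolding last_cut_def
proof (rule Greatest_equality)
  show "1 \<le> j - 1 \<and> j - 1 < n \<and> is_cut g n (j - 1)"
    using two_le_R_start R_start phi_rgf_cut by auto
  show "c \<le> j - 1" if "1 \<le> c \<and> c < n \<and> is_cut g n c" for c
  proof (rule ccontr)
    assume "\<not> c \<le> j - 1"
    then have "j \<le> c" by simp
    then show False using no_cut_after_R_start[of c] that by simp
  qed
qed

lemma psi_split_phi_rgf: "psi_split g n = i"
proof -
  have prefix: "card (g ` {1..j - 1}) = k"
    by (simp only: phi_rgf_image_prefix prefix_image card_lessThan)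
  have growth_iff: "restricted_growth {b..j - 1} g \<longleftrightarrow> restricted_growth {b..j - 1} f" for b
    by (intro iffI; erule restricted_growth_cong) (use phi_rgf_low le_pred_R_start_iff in auto)
  have "restricted_growth {i..j - 1} g"
    using growth_iff restricted_growth_truncate[OF first_split(3)] R_start by simp
  moreover have "card (g ` {i..j - 1}) = r"
    by (simp only: phi_rgf_image_prefix middle_image card_lessThan)
  ultimately have candidate: "2 \<le> i \<and> i \<le> Suc (j - 1) \<and> restricted_growth {i..j - 1} g
      \<and> card (g ` {i..j - 1}) < card (g ` {1..j - 1})"
    using first_split R_start R_label_less prefix by simp
  show ?thesis
    unfolding psi_split_def last_cut_phi_rgf
  proof (rule Least_equality)
    show "2 \<le> i \<and> i \<le> Suc (j - 1) \<and> restricted_growth {i..j - 1} g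
      \<and> card (g ` {i..j - 1}) < card (g ` {1..j - 1})" by (rule candidate)
  next
    fix b assume "2 \<le> b \<and> b \<le> Suc (j - 1) \<and> restricted_growth {b..j - 1} g
        \<and> card (g ` {b..j - 1}) < card (g ` {1..j - 1})"
    then show "i \<le> b" using no_split_before_first_split[of b] growth_iff by (meson not_le)
  qed
qed

lemma psi_rgf_phi_rgf:
  assumes "x \<in> {1..n}"
  shows "psi_rgf g n x = f x"
proof -
  have "card (g ` {i..j - 1}) = r" "card (g ` {1..j - 1}) = k"
    by (simp_all only: phi_rgf_image_prefix middle_image prefix_image card_lessThan)
  then have psi: "psi_rgf g n x = (if x < j then g x else g x - k + r)"
    unfolding psi_rgf_def last_cut_phi_rgf psi_split_phi_rgf le_pred_R_start_iff by simp
  show ?thesis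
  proof (cases "x < j")
    case True
    then show ?thesis using psi phi_rgf_low by simp
  next
    case False
    then have "r \<le> f x" using R_label_le assms by simp
    then show ?thesis using psi phi_rgf_high False by simp
  qed
qed

end

locale phi_codomain =
  fixes g :: "nat \<Rightarrow> nat" and n :: nat
  assumes rgf: "restricted_growth {1..n} g"
    and has_cut: "\<exists>c. 1 \<le> c \<and> c < n \<and> is_cut g n c"
    and unsplitable: "\<And>b. 2 \<le> b \<Longrightarrow> b \<le> n \<Longrightarrow> \<not> restricted_growth {b..n} g"
begin

abbreviation "c \<equiv> last_cut g n"
definition k :: nat where "k = card (g ` {1..c})"
abbreviation "i \<equiv> psi_split g n"
definition r :: nat where "r = card (g ` {i..c})"
abbreviation "f \<equiv> psi_rgf g n"

lemma last_cut: "1 \<le> c" "c < n" "is_cut g n c"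
  and last_cut_greatest: "1 \<le> c' \<Longrightarrow> c' < n \<Longrightarrow> is_cut g n c' \<Longrightarrow> c' \<le> c"
proof -
  obtain c0 where "1 \<le> c0 \<and> c0 < n \<and> is_cut g n c0" using has_cut by blast
  then show "1 \<le> c" "c < n" "is_cut g n c"
    unfolding last_cut_def using GreatestI_nat[where b = n] by (metis (no_types, lifting) less_imp_le)+
  show "1 \<le> c' \<Longrightarrow> c' < n \<Longrightarrow> is_cut g n c' \<Longrightarrow> c' \<le> c"
    unfolding last_cut_def by (rule Greatest_le_nat[where b = n]) auto
qed

lemma prefix_image: "g ` {1..c} = {..<k}"
  unfolding k_def using restricted_growth_image[OF _ restricted_growth_truncate[OF rgf]] last_cut by simp

lemma prefix_less: "x \<in> {1..c} \<Longrightarrow> g x < k"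
  using prefix_image by blast

lemma tail_ge:
  assumes "x \<in> {Suc c..n}"
  shows "k \<le> g x"
proof (rule ccontr)
  assume "\<not> k \<le> g x"
  then have "g x \<in> g ` {1..c}" unfolding prefix_image by simp
  then obtain y where "y \<in> {1..c}" "g y = g x" by (metis imageE)
  then show False using last_cut(3) assms unfolding is_cut_def by blast
qed

lemma psi_split: "2 \<le> i" "i \<le> Suc c" "restricted_growth {i..c} g" "r < k"
proof -
  have "0 < k" unfolding k_def using last_cut by (simp add: card_gt_0_iff)
  then have "2 \<le> Suc c \<and> Suc c \<le> Suc c \<and> restricted_growth {Suc c..c} g \<and> card (g ` {Suc c..c}) < k"
    using last_cut by (simp add: restricted_growth_def)
  then have "2 \<le> i \<and> i \<le> Suc c \<and> restricted_growth {i..c} g \<and> card (g ` {i..c}) < k"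
    unfolding psi_split_def k_def[symmetric] by (rule LeastI)
  then show "2 \<le> i" "i \<le> Suc c" "restricted_growth {i..c} g" "r < k" unfolding r_def by auto
qed

lemma psi_split_least:
  "2 \<le> b \<Longrightarrow> b \<le> Suc c \<Longrightarrow> restricted_growth {b..c} g \<Longrightarrow> card (g ` {b..c}) < k \<Longrightarrow> i \<le> b"
  unfolding psi_split_def k_def by (rule Least_le) simp

lemma middle_image: "g ` {i..c} = {..<r}"
  unfolding r_def using restricted_growth_image[OF _ psi_split(3)] by simp

lemma psi_rgf_low: "x \<le> c \<Longrightarrow> f x = g x"
  and psi_rgf_high: "c < x \<Longrightarrow> f x = g x - k + r"
  unfolding psi_rgf_def k_def r_def by simp_all

lemma psi_rgf_tail_ge: "x \<in> {Suc c..n} \<Longrightarrow> r \<le> f x"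
  using psi_rgf_high[of x] tail_ge[of x] by simp

lemma g_after_last_cut: "g (Suc c) = k"
proof -
  have "Suc c \<in> {1..n}" using last_cut by simp
  moreover have "\<not> k < g (Suc c)"
  proof
    assume "k < g (Suc c)"
    then obtain y where "y \<in> {1..n}" "y < Suc c" "g y = k"
      using restricted_growthD[OF rgf \<open>Suc c \<in> {1..n}\<close>] by blast
    then show False using prefix_less[of y] by simp
  qed
  ultimately show ?thesis using tail_ge[of "Suc c"] last_cut by simp
qed

lemma psi_rgf_after_last_cut: "f (Suc c) = r"
  using psi_rgf_high g_after_last_cut by simp

lemma psi_rgf_restricted_growth: "restricted_growth {1..n} f"
proof -
  have prefix: "{x\<in>{1..n}. x \<le> c} = {1..c}" using last_cut by auto
  have low_part: "restricted_growth {x\<in>{1..n}. x \<le> c} g"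
    unfolding prefix using restricted_growth_truncate[OF rgf] last_cut by simp
  have low: "g y < k" if "y \<in> {1..n}" "y \<le> c" for y
    using prefix_less that by simp
  have high: "k \<le> g x" if "x \<in> {1..n}" "c < x" for x
    using tail_ge that by simp
  have covered: "{..<r} \<subseteq> g ` {x\<in>{1..n}. x \<le> c}"
    unfolding prefix prefix_image using psi_split(4) by auto
  have "(if x \<le> c then g x else g x - k + r) = f x" for x
    using psi_rgf_low[of x] psi_rgf_high[of x] by simp
  then show ?thesis
    using restricted_growth_relabel[OF low_part rgf refl low high covered]
    by (rule_tac restricted_growth_cong) auto
qed

lemma psi_rgf_tail_restricted_growth: "restricted_growth {i..n} f"
proof -
  have middle: "{x\<in>{i..n}. x \<le> c} = {i..c}" using last_cut by auto
  have low_part: "restricted_growth {x\<in>{i..n}. x \<le> c} g"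
    unfolding middle by (rule psi_split(3))
  have same_high: "{y\<in>{1..n}. c < y} = {x\<in>{i..n}. c < x}"
    using psi_split(2) by auto
  have low: "g y < k" if "y \<in> {1..n}" "y \<le> c" for y
    using prefix_less that by simp
  have high: "k \<le> g x" if "x \<in> {i..n}" "c < x" for x
    using tail_ge that by simp
  have covered: "{..<r} \<subseteq> g ` {x\<in>{i..n}. x \<le> c}"
    unfolding middle middle_image ..
  have "(if x \<le> c then g x else g x - k + r) = f x" for x
    using psi_rgf_low[of x] psi_rgf_high[of x] by simp
  then show ?thesis
    using restricted_growth_relabel[OF low_part rgf same_high low high covered]
    by (rule_tac restricted_growth_cong) auto
qed

lemma no_cut_at_last_cut: "\<not> is_cut f n c"
proof
  assume cut: "is_cut f n c"
  have "r \<in> g ` {1..c}" unfolding prefix_image using psi_split(4) by simp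
  then obtain x where "x \<in> {1..c}" "g x = r" by (metis imageE)
  then have "f x = f (Suc c)" using psi_rgf_low psi_rgf_after_last_cut by simp
  then show False using cut \<open>x \<in> {1..c}\<close> last_cut unfolding is_cut_def by simp
qed

lemma no_cut_after_last_cut:
  assumes "c < c'" "c' < n"
  shows "\<not> is_cut f n c'"
proof
  assume cut: "is_cut f n c'"
  have "\<not> is_cut g n c'" using last_cut_greatest[of c'] last_cut assms by auto
  then obtain x y where x: "x \<in> {1..c'}" and y: "y \<in> {Suc c'..n}" and "g x = g y"
    unfolding is_cut_def by blast
  moreover have "k \<le> g y" using tail_ge y assms by simp
  ultimately have "c < x" using prefix_less[of x] by (metis atLeastAtMost_iff not_le not_less)
  then have "f x = f y" using psi_rgf_high \<open>g x = g y\<close> x y assms by simp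
  then show False using cut x y unfolding is_cut_def by blast
qed

lemma no_cut_before_last_cut:
  assumes c': "1 \<le> c'" "c' < c"
  shows "\<not> is_cut f n c'"
proof
  assume cut: "is_cut f n c'"
  have f_prefix: "f x = g x" if "x \<le> c" for x using psi_rgf_low that by simp
  define m where "m = card (g ` {1..c'})"
  have prefix': "g ` {1..c'} = {..<m}"
    unfolding m_def using restricted_growth_image[OF _ restricted_growth_truncate[OF rgf]] last_cut c'
    by simp
  have "m \<le> r"
  proof (rule ccontr)
    assume "\<not> m \<le> r"
    then have "r \<in> g ` {1..c'}" unfolding prefix' by simp
    then obtain x where "x \<in> {1..c'}" "g x = r" by (metis imageE)
    then have "f x = f (Suc c)" using f_prefix c' psi_rgf_after_last_cut by simp
    then show False using cut \<open>x \<in> {1..c'}\<close> c' last_cut unfolding is_cut_def by simp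
  qed
  moreover have "0 < m" unfolding m_def using c' by (simp add: card_gt_0_iff)
  ultimately have "i \<le> c"
    unfolding r_def by (cases "i \<le> c") auto
  have "i \<le> c'"
  proof (rule ccontr)
    assume "\<not> i \<le> c'"
    have "g i = 0" using psi_split(3) \<open>i \<le> c\<close> by (intro restricted_growth_least_zero) auto
    moreover have "g 1 = 0" using rgf last_cut by (intro restricted_growth_least_zero) auto
    ultimately have "f 1 = f i" using f_prefix \<open>i \<le> c\<close> last_cut by simp
    then show False using cut c' \<open>\<not> i \<le> c'\<close> \<open>i \<le> c\<close> last_cut unfolding is_cut_def by simp
  qed
  have "m \<le> g (Suc c')"
  proof (rule ccontr)
    assume "\<not> m \<le> g (Suc c')"
    then have "g (Suc c') \<in> g ` {1..c'}" unfolding prefix' by simp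
    then obtain x where "x \<in> {1..c'}" "g x = g (Suc c')" by (metis imageE)
    then have "f x = f (Suc c')" using f_prefix c' by simp
    then show False using cut \<open>x \<in> {1..c'}\<close> c' last_cut unfolding is_cut_def by simp
  qed
  have "{..<m} \<subseteq> g ` {i..c}"
  proof
    fix v assume "v \<in> {..<m}"
    then have "v < g (Suc c')" using \<open>m \<le> g (Suc c')\<close> by simp
    moreover have "Suc c' \<in> {i..c}" using \<open>i \<le> c'\<close> c' by simp
    ultimately obtain y where "y \<in> {i..c}" "g y = v" using restricted_growthD[OF psi_split(3)] by blast
    then show "v \<in> g ` {i..c}" by blast
  qed
  have "g ` {1..c} \<subseteq> g ` {i..c}"
  proof
    fix v assume "v \<in> g ` {1..c}"
    then obtain x where x: "x \<in> {1..c}" "v = g x" by blast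
    show "v \<in> g ` {i..c}"
    proof (cases "x \<le> c'")
      case True
      then have "g x \<in> g ` {1..c'}" using x by simp
      then have "v \<in> {..<m}" unfolding prefix' x(2) .
      then show ?thesis using \<open>{..<m} \<subseteq> g ` {i..c}\<close> by blast
    next
      case False
      then show ?thesis using x \<open>i \<le> c'\<close> by simp
    qed
  qed
  then have "k \<le> r" unfolding k_def r_def by (intro card_mono) auto
  then show False using psi_split(4) by simp
qed

lemma psi_rgf_no_cut: "1 \<le> c' \<Longrightarrow> c' < n \<Longrightarrow> \<not> is_cut f n c'"
  using no_cut_before_last_cut no_cut_at_last_cut no_cut_after_last_cut by (metis linorder_cases)

lemma phi_domain: "phi_domain f n"
proof
  show "1 \<le> n" using last_cut by simp
  show "\<exists>i\<ge>2. i \<le> n \<and> restricted_growth {i..n} f"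
    using psi_split last_cut psi_rgf_tail_restricted_growth by (intro exI[of _ i]) auto
qed (use psi_rgf_restricted_growth psi_rgf_no_cut in auto)

lemma psi_rgf_threshold: "x \<in> {i..n} \<Longrightarrow> r \<le> f x \<longleftrightarrow> Suc c \<le> x"
proof (cases "x \<le> c")
  case True
  moreover assume "x \<in> {i..n}"
  ultimately have "g x \<in> {..<r}" unfolding middle_image[symmetric] by simp
  then show ?thesis using psi_rgf_low True by simp
next
  case False
  moreover assume "x \<in> {i..n}"
  ultimately show ?thesis using psi_rgf_tail_ge[of x] by simp
qed

lemma first_split_psi_rgf: "first_split f n = i"
  unfolding first_split_def
proof (rule Least_equality)
  show "2 \<le> i \<and> i \<le> n \<and> restricted_growth {i..n} f"
    using psi_split last_cut psi_rgf_tail_restricted_growth by auto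
next
  fix b assume b: "2 \<le> b \<and> b \<le> n \<and> restricted_growth {b..n} f"
  show "i \<le> b"
  proof (rule ccontr)
    assume "\<not> i \<le> b"
    then have "b \<le> c" using psi_split(2) by simp
    have prefix: "{x\<in>{b..n}. x \<le> c} = {b..c}" using last_cut by auto
    have f_low: "restricted_growth {b..c} f"
      using restricted_growth_truncate[of b n f c] b last_cut(2) by simp
    then have g_low: "restricted_growth {b..c} g" by (rule restricted_growth_cong) (simp add: psi_rgf_low)
    have "card (g ` {b..c}) \<le> k" unfolding k_def using b by (intro card_mono) auto
    moreover have "\<not> card (g ` {b..c}) < k"
    proof
      assume "card (g ` {b..c}) < k"
      then have "i \<le> b" using psi_split_least[of b] b g_low \<open>b \<le> c\<close> by simp
      then show False using \<open>\<not> i \<le> b\<close> by simp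
    qed
    ultimately have "card (g ` {b..c}) = k" by simp
    moreover have "g ` {b..c} = {..<card (g ` {b..c})}" by (rule restricted_growth_image[OF _ g_low]) simp
    ultimately have "g ` {b..c} = {..<k}" by (simp only:)
    moreover have "f ` {b..c} = g ` {b..c}" using psi_rgf_low by (intro image_cong) auto
    ultimately have covered: "{..<k} \<subseteq> f ` {x\<in>{b..n}. x \<le> c}" unfolding prefix by simp
    have low_part: "restricted_growth {x\<in>{b..n}. x \<le> c} f" unfolding prefix by (rule f_low)
    have same_high: "{y\<in>{i..n}. c < y} = {x\<in>{b..n}. c < x}"
      using psi_split(2) \<open>\<not> i \<le> b\<close> by auto
    have low: "f y < r" if "y \<in> {i..n}" "y \<le> c" for y
      using psi_rgf_threshold[OF that(1)] that(2) by simp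
    have high: "r \<le> f x" if "x \<in> {b..n}" "c < x" for x
      using psi_rgf_tail_ge that by simp
    have "restricted_growth {b..n} (\<lambda>x. if x \<le> c then f x else f x - r + k)"
      by (rule restricted_growth_relabel[OF low_part psi_rgf_tail_restricted_growth same_high low high covered])
    moreover have "(if x \<le> c then f x else f x - r + k) = g x" if "x \<in> {b..n}" for x
      using psi_rgf_low[of x] psi_rgf_high[of x] tail_ge[of x] that by simp
    ultimately have "restricted_growth {b..n} g" by (rule restricted_growth_cong)
    then show False using unsplitable b by simp
  qed
qed

lemma R_label_psi_rgf: "R_label {i..n} f = r"
proof -
  have after_cut: "Suc c \<in> {i..n}" using psi_split(2) last_cut by simp
  have "{x\<in>{i..n}. r \<le> f x} = {x\<in>{i..n}. Suc c \<le> x}" using psi_rgf_threshold by auto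
  moreover have "r < card (f ` {i..n})"
    using restricted_growth_less_card[OF _ psi_rgf_tail_restricted_growth after_cut]
      psi_rgf_after_last_cut by simp
  ultimately have "r \<le> R_label {i..n} f" using after_cut by (intro R_label_greatest)
  moreover have "\<not> r < R_label {i..n} f"
  proof
    assume less: "r < R_label {i..n} f"
    have ne: "{i..n} \<noteq> {}" using after_cut by blast
    obtain t where t: "t \<in> {i..n}" "{x\<in>{i..n}. R_label {i..n} f \<le> f x} = {x\<in>{i..n}. t \<le> x}"
      using R_label(2)[OF finite_atLeastAtMost ne] by (rule bexE)
    have t_iff: "R_label {i..n} f \<le> f x \<longleftrightarrow> t \<le> x" if "x \<in> {i..n}" for x
    proof -
      have "x \<in> {x\<in>{i..n}. R_label {i..n} f \<le> f x} \<longleftrightarrow> x \<in> {x\<in>{i..n}. t \<le> x}"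
        by (simp only: t(2))
      then show ?thesis using that by simp
    qed
    have "Suc c < t" using t_iff[OF after_cut] less psi_rgf_after_last_cut by simp
    have "is_cut g n (t - 1)"
      unfolding is_cut_def
    proof (intro ballI)
      fix x y assume x: "x \<in> {1..t - 1}" and y: "y \<in> {Suc (t - 1)..n}"
      have "t \<le> y" "c < y" "y \<in> {i..n}" using y \<open>Suc c < t\<close> t(1) by auto
      show "g x \<noteq> g y"
      proof (cases "x \<le> c")
        case True
        then show ?thesis using prefix_less[of x] tail_ge[of y] x y \<open>c < y\<close> by simp
      next
        case False
        then have "x \<in> {i..n}" "\<not> t \<le> x" using x t(1) psi_split(2) by auto
        then have "\<not> R_label {i..n} f \<le> f x" "R_label {i..n} f \<le> f y"
          using t_iff[of x] t_iff[of y] \<open>t \<le> y\<close> \<open>y \<in> {i..n}\<close> by auto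
        then have "f x \<noteq> f y" by auto
        then show ?thesis using psi_rgf_high False \<open>c < y\<close> by auto
      qed
    qed
    moreover have "1 \<le> t - 1" "t - 1 < n" using \<open>Suc c < t\<close> t(1) by auto
    ultimately have "t - 1 \<le> c" by (rule last_cut_greatest[rotated 2])
    then show False using \<open>Suc c < t\<close> by simp
  qed
  ultimately show ?thesis by simp
qed

lemma R_start_psi_rgf: "R_start f n = Suc c"
proof -
  have "{x\<in>{i..n}. r \<le> f x} = {Suc c..n}" using psi_rgf_threshold psi_split(2) by auto
  moreover have "Min {Suc c..n} = Suc c" using last_cut by (intro Min_eqI) auto
  ultimately show ?thesis unfolding R_start_def first_split_psi_rgf R_label_psi_rgf by simp
qed

lemma phi_rgf_psi_rgf:
  assumes "x \<in> {1..n}"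
  shows "phi_rgf f n x = g x"
proof -
  have "f ` {1..c} = g ` {1..c}" using psi_rgf_low by (intro image_cong) auto
  then have "card (f ` {1..c}) = k" unfolding k_def by simp
  then have "phi_rgf f n x = (if x \<le> c then f x else f x - r + k)"
    unfolding phi_rgf_def R_start_psi_rgf first_split_psi_rgf R_label_psi_rgf by simp
  then show ?thesis using psi_rgf_low[of x] psi_rgf_high[of x] tail_ge[of x] assms by simp
qed

end

lemma phi_domain_iff:
  assumes "1 \<le> n"
  shows "P \<in> A_set n - US_set n \<longleftrightarrow> (\<exists>f. P = kernel_partition {1..n} f \<and> phi_domain f n)"
proof
  assume "P \<in> A_set n - US_set n"
  then have P: "partition_on {1..n} P" "atomic n P" "splitable n P"
    unfolding A_set_def US_set_def by auto
  then obtain f where f: "restricted_growth {1..n} f" "P = kernel_partition {1..n} f"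
    using partition_on_eq_kernel_partition[of "{1..n}" P] by auto
  have "phi_domain f n"
  proof
    show "\<not> is_cut f n c" if "1 \<le> c" "c < n" for c
      using P(2) that unfolding f(2) atomic_kernel_partition_iff by blast
    show "\<exists>i\<ge>2. i \<le> n \<and> restricted_growth {i..n} f"
      using P(3) unfolding f(2) splitable_kernel_partition_iff[OF f(1)] by blast
  qed (use assms f in auto)
  then show "\<exists>f. P = kernel_partition {1..n} f \<and> phi_domain f n" using f by blast
next
  assume "\<exists>f. P = kernel_partition {1..n} f \<and> phi_domain f n"
  then obtain f where P: "P = kernel_partition {1..n} f" and f: "phi_domain f n" by blast
  have "atomic n P" unfolding P atomic_kernel_partition_iff using phi_domain.no_cut[OF f] by blast
  moreover have "splitable n P"
    unfolding P splitable_kernel_partition_iff[OF phi_domain.rgf[OF f]] using phi_domain.splitable[OF f] .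
  ultimately show "P \<in> A_set n - US_set n"
    unfolding A_set_def US_set_def P by (simp add: partition_on_kernel_partition)
qed

lemma phi_codomain_iff:
  "Q \<in> US_set n - A_set n \<longleftrightarrow> (\<exists>g. Q = kernel_partition {1..n} g \<and> phi_codomain g n)"
proof
  assume "Q \<in> US_set n - A_set n"
  then have Q: "partition_on {1..n} Q" "\<not> atomic n Q" "\<not> splitable n Q"
    unfolding A_set_def US_set_def by auto
  then obtain g where g: "restricted_growth {1..n} g" "Q = kernel_partition {1..n} g"
    using partition_on_eq_kernel_partition[of "{1..n}" Q] by auto
  have "phi_codomain g n"
  proof
    show "\<exists>c. 1 \<le> c \<and> c < n \<and> is_cut g n c"
      using Q(2) unfolding g(2) atomic_kernel_partition_iff by blast
    show "\<not> restricted_growth {b..n} g" if "2 \<le> b" "b \<le> n" for b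
      using Q(3) that unfolding g(2) splitable_kernel_partition_iff[OF g(1)] by blast
  qed (rule g(1))
  then show "\<exists>g. Q = kernel_partition {1..n} g \<and> phi_codomain g n" using g by blast
next
  assume "\<exists>g. Q = kernel_partition {1..n} g \<and> phi_codomain g n"
  then obtain g where Q: "Q = kernel_partition {1..n} g" and g: "phi_codomain g n" by blast
  have "\<not> atomic n Q" unfolding Q atomic_kernel_partition_iff using phi_codomain.has_cut[OF g] by blast
  moreover have "\<not> splitable n Q"
    unfolding Q splitable_kernel_partition_iff[OF phi_codomain.rgf[OF g]]
    using phi_codomain.unsplitable[OF g] by blast
  ultimately show "Q \<in> US_set n - A_set n"
    unfolding A_set_def US_set_def Q by (simp add: partition_on_kernel_partition)
qed

lemma phi_codomain_phi_rgf: "phi_domain f n \<Longrightarrow> phi_codomain (phi_rgf f n) n"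
proof (unfold_locales)
  assume f: "phi_domain f n"
  show "restricted_growth {1..n} (phi_rgf f n)" by (rule phi_domain.phi_rgf_restricted_growth[OF f])
  show "\<exists>c\<ge>1. c < n \<and> is_cut (phi_rgf f n) n c"
    using phi_domain.phi_rgf_cut[OF f] phi_domain.two_le_R_start[OF f] phi_domain.R_start(2)[OF f]
    by (intro exI[of _ "R_start f n - 1"]) auto
  show "\<And>b. 2 \<le> b \<Longrightarrow> b \<le> n \<Longrightarrow> \<not> restricted_growth {b..n} (phi_rgf f n)"
    by (rule phi_domain.phi_rgf_unsplitable[OF f])
qed

text \<open>\<open>phi\<close> is injective because \<open>psi_rgf\<close> recovers the labelling from that of its image.\<close>
lemma phi_kernel_partition_inj:
  assumes f1: "phi_domain f1 n" and f2: "phi_domain f2 n"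
    and eq: "phi n (kernel_partition {1..n} f1) = phi n (kernel_partition {1..n} f2)"
  shows "kernel_partition {1..n} f1 = kernel_partition {1..n} f2"
proof (rule kernel_partition_cong)
  fix x assume x: "x \<in> {1..n}"
  let ?g1 = "phi_rgf f1 n" and ?g2 = "phi_rgf f2 n"
  have "kernel_partition {1..n} ?g1 = kernel_partition {1..n} ?g2"
    using eq unfolding phi_domain.phi_kernel_partition[OF f1] phi_domain.phi_kernel_partition[OF f2] .
  then have same: "?g1 y = ?g2 y" if "y \<in> {1..n}" for y
    using restricted_growth_unique[OF phi_domain.phi_rgf_restricted_growth[OF f1]
        phi_domain.phi_rgf_restricted_growth[OF f2] _ that]
    unfolding kernel_partition_eq_iff by blast
  have "1 \<le> last_cut ?g1 n" "last_cut ?g1 n < n"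
    using phi_domain.last_cut_phi_rgf[OF f1] phi_domain.two_le_R_start[OF f1] phi_domain.R_start(2)[OF f1]
    by auto
  then show "f1 x = f2 x"
    using psi_rgf_cong[OF same _ _ x] phi_domain.psi_rgf_phi_rgf[OF f1 x] phi_domain.psi_rgf_phi_rgf[OF f2 x]
    by simp
qed

theorem mainTheorem1:
  fixes n :: nat
  assumes "n \<ge> 1"
  shows "bij_betw (phi n) (A_set n - US_set n) (US_set n - A_set n)"
  unfolding bij_betw_def
proof (intro conjI equalityI subsetI)
  show "inj_on (phi n) (A_set n - US_set n)"
  proof (rule inj_onI)
    fix P1 P2 assume P1: "P1 \<in> A_set n - US_set n" and P2: "P2 \<in> A_set n - US_set n"
      and eq: "phi n P1 = phi n P2"
    obtain f1 where "phi_domain f1 n" "P1 = kernel_partition {1..n} f1"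
      using P1 phi_domain_iff[OF assms, of P1] by blast
    moreover obtain f2 where "phi_domain f2 n" "P2 = kernel_partition {1..n} f2"
      using P2 phi_domain_iff[OF assms, of P2] by blast
    ultimately show "P1 = P2" using phi_kernel_partition_inj eq by simp
  qed
next
  fix Q assume "Q \<in> phi n ` (A_set n - US_set n)"
  then obtain P where P: "P \<in> A_set n - US_set n" and Q: "Q = phi n P" by blast
  obtain f where f: "phi_domain f n" and "P = kernel_partition {1..n} f"
    using P phi_domain_iff[OF assms, of P] by blast
  then have "Q = kernel_partition {1..n} (phi_rgf f n)" using Q phi_domain.phi_kernel_partition by simp
  then show "Q \<in> US_set n - A_set n" using phi_codomain_iff[of Q] phi_codomain_phi_rgf[OF f] by blast
next
  fix Q assume "Q \<in> US_set n - A_set n"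
  then obtain g where g: "phi_codomain g n" and Q: "Q = kernel_partition {1..n} g"
    using phi_codomain_iff[of Q] by blast
  let ?P = "kernel_partition {1..n} (psi_rgf g n)"
  have "phi n ?P = Q"
    unfolding phi_domain.phi_kernel_partition[OF phi_codomain.phi_domain[OF g]] Q
    by (rule kernel_partition_cong) (rule phi_codomain.phi_rgf_psi_rgf[OF g])
  moreover have "?P \<in> A_set n - US_set n"
    using phi_domain_iff[OF assms, of ?P] phi_codomain.phi_domain[OF g] by blast
  ultimately show "Q \<in> phi n ` (A_set n - US_set n)" by blast
qed

end
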